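(* Suppose Assumption A holds and let $\{x^k\}$ be an infinite sequence generated by Algorithm 1 with $G_k\in\mathcal{S}_{\ell,\mu}(F,x^k)$ for all $k$ (fixed $\ell\in K$, $\mu\in\mathrm{int}(K)$). Then $\{x^k\}$ has at least one accumulation point, and every accumulation point of $\{x^k\}$ is a $K$-stationary point of $\min_K F(x)$.
   Context: $K\subset\mathbb{R}^m$ is a closed, convex, pointed cone with nonempty interior; $y\preceq_K y'$ means $y'-y\in K$. $K^*=\{c:\langle c,y\rangle\ge0\ \forall y\in K\}$, and $C$ is a compact convex set with $0\notin C$, $\mathrm{cone}(C)=K^*$. $F:\mathbb{R}^n\to\mathbb{R}^m$ is differentiable with Jacobian $JF$. A point $x^*$ is $K$-stationary if $\mathrm{range}(JF(x^* ))\cap(-\mathrm{int}(K))=\emptyset$. For differentiable $\Phi$: strongly $K$-convex with $\mu\in K$ means $J\Phi(x)(y-x)+\tfrac12\|y-x\|^2\mu\preceq_K\Phi(y)-\Phi(x)$ for all $x,y$; $K$-smooth with $\ell\in K$ means $\Phi(y)-\Phi(x)\preceq_K J\Phi(x)(y-x)+\tfrac12\|y-x\|^2\ell$ for all $x,y$. Surrogate class $\mathcal{S}_{\ell,\mu}(F,x^k)$ ($\ell\in K$, $\mu\in\mathrm{int}(K)$): differentiable $G_k$ strongly $K$-convex with $\mu$ such that, with $x^{k+1}$ the minimizer of $x\mapsto\max_{c^*\in C}\langle c^*,G_k(x)\rangle$ and $H_k:=G_k-F+F(x^k)$: $F(x^{k+1})-F(x^k)\preceq_K G_k(x^{k+1})$;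 $H_k$ is $K$-smooth with $\ell$, $H_k(x^k)=0$, $JH_k(x^k)=0$. Algorithm 1: from $x^0$, for $k=0,1,\dots$ choose $G_k\in\mathcal{S}_{\ell,\mu}(F,x^k)$ and set $x^{k+1}:=\arg\min_{x}\max_{c^*\in C}\langle c^*,G_k(x)\rangle$; stop if $x^{k+1}=x^k$. Assumption A: (i) the level set $\mathcal{L}_F(x^0)=\{x:F(x)\preceq_K F(x^0)\}$ is bounded; (ii) whenever $\mathcal{K}$ is an infinite index set with $x^k\to x^*$ along $\mathcal{K}$, $G_k\in\mathcal{S}_{\ell,\mu}(F,x^k)$, and $\max_{c^*\in C}\langle c^*,G_k(x^{k+1})\rangle\to0$ along $\mathcal{K}$, then $x^*$ is $K$-stationary. *)

theory Defs
  imports "HOL-Analysis.Analysis"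
begin

definition Kle :: "'b::euclidean_space set \<Rightarrow> 'b \<Rightarrow> 'b \<Rightarrow> bool" where
  "Kle K y y' \<longleftrightarrow> y' - y \<in> K"

definition proper_cone :: "'b::euclidean_space set \<Rightarrow> bool" where
  "proper_cone K \<longleftrightarrow> cone K \<and> closed K \<and> convex K \<and> K \<inter> uminus ` K = {0} \<and> interior K \<noteq> {}"

definition dual_cone :: "'b::euclidean_space set \<Rightarrow> 'b set" where
  "dual_cone K = {c. \<forall>y\<in>K. 0 \<le> c \<bullet> y}"

definition scal :: "'b::euclidean_space set \<Rightarrow> 'b \<Rightarrow> real" where
  "scal C v = Sup ((\<lambda>c. c \<bullet> v) ` C)"

definition K_stationary ::
  "'b::euclidean_space set \<Rightarrow> ('a::euclidean_space \<Rightarrow> 'a \<Rightarrow> 'b) \<Rightarrow> 'a \<Rightarrow> bool" where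
  "K_stationary K JF x \<longleftrightarrow> range (JF x) \<inter> uminus ` interior K = {}"

definition strongly_K_convex ::
  "'b::euclidean_space set \<Rightarrow> ('a::euclidean_space \<Rightarrow> 'b) \<Rightarrow> 'b \<Rightarrow> bool" where
  "strongly_K_convex K \<Phi> \<mu> \<longleftrightarrow> (\<exists>J\<Phi>. (\<forall>x. (\<Phi> has_derivative J\<Phi> x) (at x)) \<and>
     (\<forall>x y. Kle K (J\<Phi> x (y - x) + ((1/2) * (norm (y - x))\<^sup>2) *\<^sub>R \<mu>) (\<Phi> y - \<Phi> x)))"

definition K_smooth ::
  "'b::euclidean_space set \<Rightarrow> ('a::euclidean_space \<Rightarrow> 'b) \<Rightarrow> 'b \<Rightarrow> bool" where
  "K_smooth K \<Phi> ell \<longleftrightarrow> (\<exists>J\<Phi>. (\<forall>x. (\<Phi> has_derivative J\<Phi> x) (at x)) \<and>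
     (\<forall>x y. Kle K (\<Phi> y - \<Phi> x) (J\<Phi> x (y - x) + ((1/2) * (norm (y - x))\<^sup>2) *\<^sub>R ell)))"

definition surrogates ::
  "'b::euclidean_space set \<Rightarrow> 'b set \<Rightarrow> 'b \<Rightarrow> 'b \<Rightarrow> ('a::euclidean_space \<Rightarrow> 'b) \<Rightarrow> 'a \<Rightarrow> ('a \<Rightarrow> 'b) set" where
  "surrogates K C ell \<mu> F xk = {G.
     strongly_K_convex K G \<mu> \<and>
     (\<forall>z. is_arg_min (\<lambda>x. scal C (G x)) (\<lambda>_. True) z \<longrightarrow> Kle K (F z - F xk) (G z)) \<and>
     (let H = (\<lambda>x. G x - F x + F xk) in
        K_smooth K H ell \<and> H xk = 0 \<and> (H has_derivative (\<lambda>_. 0)) (at xk))}"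

end

theory Submission
  imports Defs
begin

text \<open>
  Since C generates the dual cone and K, being a closed convex cone, is its own bidual,
  y \<preceq>_K y' holds exactly when c \<bullet> y \<le> c \<bullet> y' for all c in C. The surrogate
  G_k vanishes at x^k, so the minimal value phi_k = scal C (G_k x^{k+1}) is nonpositive, and
  for every c in C the value c \<bullet> F x^k drops by at least -phi_k in step k. Hence the iterates
  stay in the bounded level set, which yields accumulation points; moreover c \<bullet> F x^k is
  decreasing and bounded below, so its decrements, and with them phi_k, tend to zero, and
  Assumption A(ii) gives stationarity.
\<close>

lemma mem_cone_if_dual_cone_nonneg:
  fixes K :: "'b::euclidean_space set"
  assumes "cone K" "closed K" "convex K" "0 \<in> K"
    and "\<And>c. c \<in> dual_cone K \<Longrightarrow> 0 \<le> c \<bullet> v"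
  shows "v \<in> K"
proof (rule ccontr)
  assume "v \<notin> K"
  then obtain a b where ab: "a \<bullet> v < b" "\<forall>y\<in>K. b < a \<bullet> y"
    using separating_hyperplane_closed_point[OF assms(3,2)] by blast
  have b_neg: "b < 0" using ab(2) assms(4) by force
  have "a \<in> dual_cone K"
    unfolding dual_cone_def
  proof (clarify)
    fix y assume y: "y \<in> K"
    show "0 \<le> a \<bullet> y"
    proof (rule ccontr)
      assume neg: "\<not> 0 \<le> a \<bullet> y"
      define t where "t = b / (a \<bullet> y)"
      have "t \<ge> 0" using neg b_neg unfolding t_def by (simp add: divide_nonpos_neg)
      then have "t *\<^sub>R y \<in> K" using assms(1) y unfolding cone_def by blast
      then have "b < a \<bullet> (t *\<^sub>R y)" using ab(2) by blast
      also have "a \<bullet> (t *\<^sub>R y) = b" using neg unfolding t_def by simp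
      finally show False by simp
    qed
  qed
  then show False using assms(5) ab(1) b_neg by fastforce
qed

lemma Kle_iff_generators:
  fixes K C :: "'b::euclidean_space set"
  assumes "proper_cone K" "cone hull C = dual_cone K"
  shows "Kle K y y' \<longleftrightarrow> (\<forall>c\<in>C. c \<bullet> y \<le> c \<bullet> y')"
proof
  assume "Kle K y y'"
  then show "\<forall>c\<in>C. c \<bullet> y \<le> c \<bullet> y'"
    using assms(2) hull_subset[of C cone]
    unfolding Kle_def dual_cone_def by (fastforce simp: inner_diff_right)
next
  assume gen: "\<forall>c\<in>C. c \<bullet> y \<le> c \<bullet> y'"
  have "y' - y \<in> K"
  proof (rule mem_cone_if_dual_cone_nonneg)
    show "cone K" "closed K" "convex K" "0 \<in> K"
      using assms(1) unfolding proper_cone_def by auto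
    fix c assume "c \<in> dual_cone K"
    then obtain t c' where "c = t *\<^sub>R c'" "0 \<le> t" "c' \<in> C"
      using assms(2) cone_hull_expl[of C] by blast
    then show "0 \<le> c \<bullet> (y' - y)"
      using gen by (simp add: inner_diff_right mult_left_mono)
  qed
  then show "Kle K y y'" unfolding Kle_def .
qed

lemma dual_cone_generators_nonempty:
  assumes "cone hull C = dual_cone K"
  shows "C \<noteq> {}"
proof
  assume "C = {}"
  then have "dual_cone K = {}" using assms cone_hull_empty by metis
  moreover have "0 \<in> dual_cone K" unfolding dual_cone_def by simp
  ultimately show False by simp
qed

lemma inner_le_scal:
  assumes "compact C" "c \<in> C"
  shows "c \<bullet> v \<le> scal C v"
proof -
  obtain B where B: "\<forall>c\<in>C. norm c \<le> B"
    using compact_imp_bounded[OF assms(1)] bounded_iff by blast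
  have "\<forall>c\<in>C. c \<bullet> v \<le> B * norm v"
    using B by (metis Cauchy_Schwarz_ineq2 abs_le_D1 mult_right_mono norm_ge_zero order_trans)
  then have "bdd_above ((\<lambda>c. c \<bullet> v) ` C)" by (auto simp: bdd_above_def)
  then show ?thesis unfolding scal_def using assms(2) by (rule cSUP_upper2) simp
qed

lemma scal_zero: "C \<noteq> {} \<Longrightarrow> scal C 0 = 0"
  unfolding scal_def by simp

lemma surrogate_vanishes_at_center:
  "G \<in> surrogates K C ell \<mu> F xk \<Longrightarrow> G xk = 0"
  unfolding surrogates_def Let_def by auto

lemma surrogate_step_value_nonpos:
  assumes "C \<noteq> {}" "G \<in> surrogates K C ell \<mu> F xk"
    and "is_arg_min (\<lambda>z. scal C (G z)) (\<lambda>_. True) z"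
  shows "scal C (G z) \<le> 0"
  using assms surrogate_vanishes_at_center[OF assms(2)] scal_zero[OF assms(1)]
  unfolding is_arg_min_def by (metis not_le)

lemma surrogate_step_descent:
  assumes "proper_cone K" "compact C" "cone hull C = dual_cone K" "c \<in> C"
    and "G \<in> surrogates K C ell \<mu> F xk"
    and "is_arg_min (\<lambda>z. scal C (G z)) (\<lambda>_. True) z"
  shows "c \<bullet> F z - c \<bullet> F xk \<le> scal C (G z)"
proof -
  have "Kle K (F z - F xk) (G z)"
    using assms(5,6) unfolding surrogates_def by auto
  then have "c \<bullet> (F z - F xk) \<le> c \<bullet> G z"
    using Kle_iff_generators[OF assms(1,3)] assms(4) by blast
  also have "\<dots> \<le> scal C (G z)"
    by (rule inner_le_scal[OF assms(2,4)])
  finally show ?thesis by (simp add: inner_diff_right)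
qed

lemma decrements_tendsto_zero:
  fixes a phi :: "nat \<Rightarrow> real"
  assumes "\<And>k. B \<le> a k" "\<And>k. a (Suc k) - a k \<le> phi k" "\<And>k. phi k \<le> 0"
  shows "phi \<longlonglongrightarrow> 0"
proof -
  have "decseq a"
    unfolding decseq_Suc_iff using assms(2,3) by (smt (verit))
  then obtain L where "a \<longlonglongrightarrow> L"
    using decseq_convergent assms(1) by blast
  then have "(\<lambda>k. a (Suc k) - a k) \<longlonglongrightarrow> L - L"
    by (intro tendsto_diff LIMSEQ_Suc)
  then have "(\<lambda>k. a (Suc k) - a k) \<longlonglongrightarrow> 0" by simp
  from tendsto_sandwich[OF _ _ this tendsto_const] show ?thesis
    using assms(2,3) by simp
qed

lemma bounded_continuous_image:
  fixes f :: "'a::heine_borel \<Rightarrow> 'b::metric_space"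
  assumes "continuous_on UNIV f" "bounded S"
  shows "bounded (f ` S)"
proof (rule bounded_closure_image)
  have "compact (closure S)" using assms(2) by (simp add: compact_eq_bounded_closed bounded_closure)
  then show "bounded (f ` closure S)"
    using assms(1) by (intro compact_imp_bounded compact_continuous_image)
      (auto intro: continuous_on_subset)
qed

lemma inner_bounded_below:
  fixes c :: "'b::real_inner"
  assumes "bounded (range f)"
  obtains B where "\<And>k. B \<le> c \<bullet> f k"
proof -
  obtain M where M: "\<And>k. norm (f k) \<le> M" using assms unfolding bounded_iff by auto
  have "- (norm c * M) \<le> c \<bullet> f k" for k
  proof -
    have "\<bar>c \<bullet> f k\<bar> \<le> norm c * norm (f k)" by (rule Cauchy_Schwarz_ineq2)
    also have "\<dots> \<le> norm c * M" using M[of k] by (simp add: mult_left_mono)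
    finally show ?thesis by linarith
  qed
  then show ?thesis using that by blast
qed

theorem theorem1:
  fixes K C :: "'b::euclidean_space set"
    and F :: "'a::euclidean_space \<Rightarrow> 'b"
    and JF :: "'a \<Rightarrow> 'a \<Rightarrow> 'b"
    and ell \<mu> :: 'b
    and x :: "nat \<Rightarrow> 'a"
    and G :: "nat \<Rightarrow> 'a \<Rightarrow> 'b"
  assumes K: "proper_cone K"
    and C: "compact C" "convex C" "0 \<notin> C" "cone hull C = dual_cone K"
    and F: "\<And>z. (F has_derivative JF z) (at z)"
    and ell: "ell \<in> K" and \<mu>: "\<mu> \<in> interior K"
    and G: "\<And>k. G k \<in> surrogates K C ell \<mu> F (x k)"
    and step: "\<And>k. is_arg_min (\<lambda>z. scal C (G k z)) (\<lambda>_. True) (x (Suc k))"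
    and infinite: "\<And>k. x (Suc k) \<noteq> x k"
    and A1: "bounded {z. Kle K (F z) (F (x 0))}"
    and A2: "\<And>r xs. strict_mono r \<Longrightarrow> (x \<circ> r) \<longlonglongrightarrow> xs \<Longrightarrow>
               (\<lambda>j. scal C (G (r j) (x (Suc (r j))))) \<longlonglongrightarrow> 0 \<Longrightarrow> K_stationary K JF xs"
  shows "(\<exists>r a. strict_mono r \<and> (x \<circ> r) \<longlonglongrightarrow> a) \<and>
         (\<forall>r a. strict_mono r \<and> (x \<circ> r) \<longlonglongrightarrow> a \<longrightarrow> K_stationary K JF a)"
proof -
  define phi where "phi k = scal C (G k (x (Suc k)))" for k
  have "C \<noteq> {}" using C(4) by (rule dual_cone_generators_nonempty)
  then obtain c0 where c0: "c0 \<in> C" by blast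
  have phi_nonpos: "phi k \<le> 0" for k
    unfolding phi_def using surrogate_step_value_nonpos[OF \<open>C \<noteq> {}\<close> G step] .
  have descent: "c \<bullet> F (x (Suc k)) - c \<bullet> F (x k) \<le> phi k" if "c \<in> C" for c k
    unfolding phi_def using surrogate_step_descent[OF K C(1,4) that G step] .
  have "c \<bullet> F (x k) \<le> c \<bullet> F (x 0)" if "c \<in> C" for c k
  proof (induction k)
    case (Suc k)
    then show ?case using descent[OF that, of k] phi_nonpos[of k] by linarith
  qed simp
  then have "range x \<subseteq> {z. Kle K (F z) (F (x 0))}"
    using Kle_iff_generators[OF K C(4)] by auto
  then have x_bounded: "bounded (range x)" using A1 by (rule bounded_subset[rotated])
  moreover have "continuous_on UNIV F"
    using F by (intro continuous_at_imp_continuous_on ballI has_derivative_continuous)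
  ultimately have "bounded (range (F \<circ> x))"
    by (metis bounded_continuous_image image_comp)
  then obtain B where "\<And>k. B \<le> c0 \<bullet> (F \<circ> x) k" using inner_bounded_below by blast
  then have "phi \<longlonglongrightarrow> 0"
    using descent[OF c0] phi_nonpos
    by (intro decrements_tendsto_zero[where a = "\<lambda>k. c0 \<bullet> F (x k)"]) auto
  then have "K_stationary K JF a" if "strict_mono r" "(x \<circ> r) \<longlonglongrightarrow> a" for r a
    using A2[OF that] LIMSEQ_subseq_LIMSEQ[OF _ that(1), of phi] by (simp add: phi_def o_def)
  then show ?thesis
    using bounded_imp_convergent_subsequence[OF x_bounded] by blast
qed

end
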